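(* Let $S=(S_i)_{i\in\mathbb{Z}}\in\{\pm 1\}^{\mathbb{Z}}$ be a bi-infinite binary sequence whose hull (the closure of its orbit under the shift map in $\{\pm1\}^{\mathbb{Z}}$) is a uniquely ergodic dynamical system under the shift action. Let $\omega_S=\sum_{i\in\mathbb{Z}} S_i\,\delta_i$ and let $\gamma_S=\sum_{m\in\mathbb{Z}}\eta_S(m)\,\delta_m$ be its natural autocorrelation, with coefficients $$\eta_S(m)=\lim_{N\to\infty}\frac{1}{2N+1}\sum_{i=-N}^{N} S_i S_{i-m},$$ so that $\eta_S(0)=1$. Fix $0\le p\le 1$ and let $(Y_i)_{i\in\mathbb{Z}}$ be a family of i.i.d. random variables, each taking the value $+1$ with probability $p$ and $-1$ with probability $1-p$. Define the random Dirac comb (the "Bernoullisation" of $\omega_S$) $$\omega_{S;p}=\sum_{i\in\mathbb{Z}} S_i Y_i\,\delta_i .$$ Then, almost surely, the natural autocorrelation $\gamma_{S;p}=\sum_{m\in\mathbb{Z}}\eta_{S;p}(m)\,\delta_m$ of $\omega_{S;p}$ exists, i.e. for every $m\in\mathbb{Z}$ the limit $\eta_{S;p}(m)=\lim_{N\to\infty}\frac{1}{2N+1}\sum_{i=-N}^{N} Z_iZ_{i-m}$ with $Z_i=S_iY_i$ exists, and one has $\eta_{S;p}(0)=1$ and $\eta_{S;p}(m)=(2p-1)^2\,\eta_S(m)$ for all $m\neq 0$. Equivalently, almost surely $$\gamma_{S;p}=(2p-1)^2\,\gamma_S+4p(1-p)\,\delta_0 .$$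
   Context: $\delta_x$ denotes the Dirac measure at $x\in\mathbb{R}$. For a (weighted) Dirac comb $\omega=\sum_{i\in\mathbb{Z}} w_i\delta_i$ with real weights, its natural autocorrelation (if it exists) is the measure $\gamma=\sum_{m\in\mathbb{Z}}\eta(m)\delta_m$ with $\eta(m)=\lim_{N\to\infty}\frac{1}{2N+1}\sum_{i=-N}^N w_i w_{i-m}$, i.e. the vague limit of $\frac{1}{2N+1}\,\omega_N*\widetilde{\omega_N}$ where $\omega_N$ is the restriction of $\omega$ to $[-N,N]$ and $\widetilde{\mu}(A)=\overline{\mu(-A)}$. *)

theory Defs
  imports "HOL-Probability.Probability"
begin

text \<open>Bi-infinite sequences are elements of \<open>int \<Rightarrow> real\<close> with the product topology
  (Function_Topology); the space of \<open>\<plusminus>1\<close>-sequences is a closed subset of it.\<close>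

definition shift :: "(int \<Rightarrow> real) \<Rightarrow> (int \<Rightarrow> real)" where
  "shift x = (\<lambda>i. x (i + 1))"

definition seq_hull :: "(int \<Rightarrow> real) \<Rightarrow> (int \<Rightarrow> real) set" where
  "seq_hull S = closure ((\<lambda>k i. S (i + k)) ` UNIV)"

definition shift_inv_prob_on :: "(int \<Rightarrow> real) set \<Rightarrow> (int \<Rightarrow> real) measure \<Rightarrow> bool" where
  "shift_inv_prob_on X \<mu> \<longleftrightarrow> prob_space \<mu> \<and> sets \<mu> = sets borel \<and> emeasure \<mu> X = 1 \<and>
     (\<forall>A \<in> sets borel. emeasure \<mu> (shift -` A) = emeasure \<mu> A)"

definition uniquely_ergodic_hull :: "(int \<Rightarrow> real) \<Rightarrow> bool" where
  "uniquely_ergodic_hull S \<longleftrightarrow> (\<exists>!\<mu>. shift_inv_prob_on (seq_hull S) \<mu>)"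

definition autocorr_avg :: "(int \<Rightarrow> real) \<Rightarrow> int \<Rightarrow> nat \<Rightarrow> real" where
  "autocorr_avg w m N = (1 / (2 * real N + 1)) * (\<Sum>i\<in>{-int N..int N}. w i * w (i - m))"

definition eta :: "(int \<Rightarrow> real) \<Rightarrow> int \<Rightarrow> real" where
  "eta w m = lim (autocorr_avg w m)"

end

theory Submission
  imports Defs "HOL-Library.Discrete_Functions" "HOL-Real_Asymp.Real_Asymp"
begin

text \<open>Unique ergodicity makes the autocorrelation of \<open>S\<close> converge. Encoding \<open>\<plusminus>1\<close>-sequences
  continuously into \<open>[0, 2/3]\<close>, Helly's selection theorem gives subsequential weak limits of the
  empirical measures along the orbit of \<open>S\<close>; their push-forwards to the hull are shift-invariant,
  hence equal to the unique invariant measure, so every subsequence of the orbit averages has a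
  further subsequence with one and the same limit.

  For the Bernoullisation and \<open>m \<noteq> 0\<close>, the product \<open>S\<^sub>i Y\<^sub>i S\<^sub>i\<^sub>-\<^sub>m Y\<^sub>i\<^sub>-\<^sub>m\<close> equals
  \<open>(2p - 1)\<^sup>2 S\<^sub>i S\<^sub>i\<^sub>-\<^sub>m + W\<^sub>i\<close> with bounded centred terms \<open>W\<^sub>i\<close> that are uncorrelated
  unless \<open>|i - j| \<in> {0, |m|}\<close>. A second-moment bound and Borel--Cantelli give the strong law
  for \<open>W\<close> along the squares \<open>N = k\<^sup>2\<close>, and bounded increments fill the gaps between squares.\<close>

section \<open>Continuous coding of sign sequences by reals\<close>

definition pm_seqs :: "(int \<Rightarrow> real) set" where
  "pm_seqs = {x. \<forall>i. x i \<in> {-1, 1}}"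

text \<open>A \<open>\<plusminus>1\<close>-sequence is encoded as a base-4 number with digits 0 and 2, the digit of
  \<open>x j\<close> sitting at position \<open>to_nat j\<close>. The fractional part of \<open>4 ^ k * r\<close> then lies in
  \<open>[0, 1/6]\<close> or in \<open>[1/2, 2/3]\<close> according to the \<open>k\<close>-th digit, so a clamped cosine reads off
  each coordinate continuously.\<close>

definition pm_encode :: "(int \<Rightarrow> real) \<Rightarrow> real" where
  "pm_encode x = (\<Sum>n. (x (from_nat n) + 1) / 4 ^ (n + 1))"

definition pm_coord :: "int \<Rightarrow> real \<Rightarrow> real" where
  "pm_coord j r = max (-1) (min 1 (-2 * cos (2 * pi * (4 ^ to_nat j * r - 1/12))))"

definition pm_decode :: "real \<Rightarrow> (int \<Rightarrow> real)" where
  "pm_decode r = (\<lambda>j. pm_coord j r)"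

lemma base4_series_bounds:
  fixes d :: "nat \<Rightarrow> real"
  assumes d: "\<And>n. 0 \<le> d n \<and> d n \<le> 2"
  shows "summable (\<lambda>n. d n / 4 ^ (n + 1))"
    and "0 \<le> (\<Sum>n. d n / 4 ^ (n + 1))"
    and "(\<Sum>n. d n / 4 ^ (n + 1)) \<le> 2/3"
proof -
  have geom: "(\<lambda>n. 1/2 * (1/4::real) ^ n) sums (1/2 * (1 / (1 - 1/4)))"
    by (intro sums_mult geometric_sums) auto
  have le: "d n / 4 ^ (n + 1) \<le> 1/2 * (1/4) ^ n" for n
  proof -
    have "d n / 4 ^ (n + 1) \<le> 2 / 4 ^ (n + 1)"
      using d[of n] by (intro divide_right_mono) auto
    also have "\<dots> = 1/2 * (1/4) ^ n" by (simp add: power_divide)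
    finally show ?thesis .
  qed
  show sm: "summable (\<lambda>n. d n / 4 ^ (n + 1))"
    by (rule summable_comparison_test'[OF sums_summable[OF geom]]) (use d le in auto)
  show "0 \<le> (\<Sum>n. d n / 4 ^ (n + 1))"
    using d by (intro suminf_nonneg[OF sm]) auto
  have "(\<Sum>n. d n / 4 ^ (n + 1)) \<le> (\<Sum>n. 1/2 * (1/4::real) ^ n)"
    by (rule suminf_le[OF le sm sums_summable[OF geom]])
  also have "\<dots> = 2/3" using sums_unique[OF geom] by simp
  finally show "(\<Sum>n. d n / 4 ^ (n + 1)) \<le> 2/3" .
qed

lemma base4_digit_expansion:
  fixes d :: "nat \<Rightarrow> real"
  assumes d: "\<And>n. d n \<in> {0, 2}"
  obtains z :: int and t where "4 ^ k * (\<Sum>n. d n / 4 ^ (n + 1)) = of_int z + d k / 4 + t"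
    and "0 \<le> t" and "t \<le> 1/6"
proof -
  have d02: "0 \<le> d n \<and> d n \<le> 2" for n using d[of n] by auto
  define f where "f n = d n / 4 ^ (n + 1)" for n
  have sm: "summable f" unfolding f_def by (rule base4_series_bounds(1)[OF d02])
  define t where "t = 1/4 * (\<Sum>n. d (n + Suc k) / 4 ^ (n + 1))"
  have "summable (\<lambda>n. f (n + Suc k))" using sm by (subst summable_iff_shift)
  then have "4 ^ k * (\<Sum>n. f (n + Suc k)) = (\<Sum>n. 4 ^ k * f (n + Suc k))"
    by (rule suminf_mult[symmetric])
  also have "\<dots> = t"
    unfolding t_def
    by (subst suminf_mult[symmetric], rule base4_series_bounds(1), use d02 in simp)
       (simp add: f_def power_add field_simps)
  finally have tail: "4 ^ k * (\<Sum>n. f (n + Suc k)) = t" .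
  have t_bounds: "0 \<le> t" "t \<le> 1/6"
    using base4_series_bounds(2,3)[of "\<lambda>n. d (n + Suc k)"] d02 unfolding t_def by auto
  have "4 ^ k * sum f {..<k} = (\<Sum>n<k. d n * 4 ^ (k - n - 1))"
    unfolding sum_distrib_left f_def
  proof (rule sum.cong[OF refl])
    fix n assume "n \<in> {..<k}"
    then have "k = (k - n - 1) + (n + 1)" by simp
    then have "(4::real) ^ k = 4 ^ (k - n - 1) * 4 ^ (n + 1)"
      by (metis power_add)
    then show "4 ^ k * (d n / 4 ^ (n + 1)) = d n * 4 ^ (k - n - 1)" by simp
  qed
  also have "\<dots> \<in> \<int>"
  proof (rule Ints_sum)
    fix n
    from d[of n] show "d n * 4 ^ (k - n - 1) \<in> \<int>" by auto
  qed
  finally obtain z where z: "4 ^ k * sum f {..<k} = of_int z" by (auto elim: Ints_cases)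
  have "4 ^ k * (\<Sum>n. f n) = 4 ^ k * (\<Sum>n. f (n + Suc k)) + 4 ^ k * sum f {..<Suc k}"
    using suminf_split_initial_segment[OF sm, of "Suc k"] by (simp add: algebra_simps)
  also have "\<dots> = of_int z + d k / 4 + t"
    unfolding tail by (simp only: sum.lessThan_Suc distrib_left z) (simp add: f_def power_add)
  finally show ?thesis using that t_bounds unfolding f_def by blast
qed

lemma pm_seqs_digits:
  assumes "x \<in> pm_seqs" shows "x j + 1 \<in> {0, 2}"
proof -
  have "x j = -1 \<or> x j = 1" using assms unfolding pm_seqs_def by auto
  then show ?thesis by auto
qed

lemma pm_encode_bounds:
  assumes "x \<in> pm_seqs" shows "0 \<le> pm_encode x" "pm_encode x \<le> 2/3"
proof -
  have "0 \<le> x (from_nat n) + 1 \<and> x (from_nat n) + 1 \<le> 2" for n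
    using pm_seqs_digits[OF assms, of "from_nat n"] by auto
  then show "0 \<le> pm_encode x" "pm_encode x \<le> 2/3"
    unfolding pm_encode_def by (fact base4_series_bounds(2,3))+
qed

lemma cos_ge_half: assumes "\<bar>\<theta>\<bar> \<le> pi/3" shows "1/2 \<le> cos \<theta>"
proof -
  have "cos (pi/3) \<le> cos \<bar>\<theta>\<bar>"
    by (rule cos_monotone_0_pi_le) (use assms in auto)
  then show ?thesis by (simp add: cos_60)
qed

lemma pm_coord_pm_encode:
  assumes x: "x \<in> pm_seqs" shows "pm_coord j (pm_encode x) = x j"
proof -
  define d where "d n = x (from_nat n) + 1" for n
  obtain z t where zt: "4 ^ to_nat j * (\<Sum>n. d n / 4 ^ (n + 1)) = of_int z + d (to_nat j) / 4 + t"
    and t: "0 \<le> t" "t \<le> 1/6"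
    using base4_digit_expansion[of d] pm_seqs_digits[OF x] unfolding d_def by blast
  define y where "y = pi * (x j + 1) / 2 + 2 * pi * (t - 1/12)"
  have "2 * pi * (4 ^ to_nat j * pm_encode x - 1/12) = y + (2 * pi) * of_int z"
    using zt unfolding pm_encode_def d_def y_def by (simp add: algebra_simps)
  then have c: "cos (2 * pi * (4 ^ to_nat j * pm_encode x - 1/12)) = cos y"
    by (simp add: cos_add)
  have "\<bar>t - 1/12\<bar> \<le> 1/12" using t unfolding abs_le_iff by linarith
  then have "\<bar>2 * pi * (t - 1/12)\<bar> \<le> 2 * pi * (1/12)"
    using mult_left_mono[of _ _ "2 * pi"] by (simp add: abs_mult)
  then have "1/2 \<le> cos (2 * pi * (t - 1/12))"
    by (intro cos_ge_half) simp
  moreover have "x j = -1 \<or> x j = 1" using x unfolding pm_seqs_def by auto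
  ultimately show ?thesis unfolding pm_coord_def c y_def by auto
qed

lemma abs_pm_coord_le: "\<bar>pm_coord j r\<bar> \<le> 1"
  unfolding pm_coord_def by auto

lemma continuous_on_pm_coord: "continuous_on UNIV (pm_coord j)"
  unfolding pm_coord_def by (intro continuous_intros)

lemma continuous_on_pm_decode: "continuous_on UNIV pm_decode"
  unfolding pm_decode_def
  by (intro continuous_on_coordinatewise_then_product continuous_on_pm_coord)

lemma pm_coord_measurable[measurable]: "pm_coord j \<in> borel_measurable borel"
  by (rule borel_measurable_continuous_onI[OF continuous_on_pm_coord])

lemma pm_decode_measurable[measurable]: "pm_decode \<in> borel_measurable borel"
  by (rule borel_measurable_continuous_onI[OF continuous_on_pm_decode])

lemma closed_pm_seqs: "closed pm_seqs"
proof -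
  have "closed ((\<lambda>x::int \<Rightarrow> real. x i) -` {-1, 1})" for i
  proof (rule continuous_closed_vimage)
    show "isCont (\<lambda>x::int \<Rightarrow> real. x i) x" for x
      using continuous_on_product_coordinates[of i] continuous_on_eq_continuous_at by blast
  qed auto
  then have "closed (\<Inter>i. (\<lambda>x::int \<Rightarrow> real. x i) -` {-1, 1})" by blast
  moreover have "pm_seqs = (\<Inter>i. (\<lambda>x. x i) -` {-1, 1})" unfolding pm_seqs_def by auto
  ultimately show ?thesis by simp
qed

section \<open>Empirical measures along an orbit\<close>

definition orbit_code :: "(int \<Rightarrow> real) \<Rightarrow> int \<Rightarrow> real" where
  "orbit_code S i = pm_encode (\<lambda>j. S (j + i))"

definition window_avg :: "(int \<Rightarrow> real) \<Rightarrow> (real \<Rightarrow> real) \<Rightarrow> nat \<Rightarrow> real" where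
  "window_avg S g N = (\<Sum>i\<in>{-int N..int N}. g (orbit_code S i)) / (2 * real N + 1)"

definition empirical_measure :: "(int \<Rightarrow> real) \<Rightarrow> nat \<Rightarrow> real measure" where
  "empirical_measure S N = distr (uniform_count_measure {-int N..int N}) borel (orbit_code S)"

lemma pm_seqs_translate: "S \<in> pm_seqs \<Longrightarrow> (\<lambda>j. S (j + i)) \<in> pm_seqs"
  unfolding pm_seqs_def by auto

lemma pm_coord_orbit_code: "S \<in> pm_seqs \<Longrightarrow> pm_coord j (orbit_code S i) = S (j + i)"
  unfolding orbit_code_def by (simp add: pm_coord_pm_encode pm_seqs_translate)

lemma pm_decode_orbit_code: "S \<in> pm_seqs \<Longrightarrow> pm_decode (orbit_code S i) = (\<lambda>j. S (j + i))"
  unfolding pm_decode_def by (simp add: pm_coord_orbit_code)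

lemma measurable_uniform_count_measure_borel:
  "f \<in> measurable (uniform_count_measure A) borel"
  by (simp add: measurable_cong_sets[OF sets_uniform_count_measure_count_space refl])

lemma real_distribution_empirical_measure: "real_distribution (empirical_measure S N)"
proof -
  have "prob_space (empirical_measure S N)"
    unfolding empirical_measure_def
    by (intro prob_space.prob_space_distr prob_space_uniform_count_measure
        measurable_uniform_count_measure_borel) auto
  then show ?thesis
    unfolding real_distribution_def real_distribution_axioms_def by (simp add: empirical_measure_def)
qed

lemma integral_empirical_measure:
  assumes "g \<in> borel_measurable borel"
  shows "integral\<^sup>L (empirical_measure S N) g = window_avg S g N"
proof -
  have "integral\<^sup>L (empirical_measure S N) g
      = integral\<^sup>L (uniform_count_measure {-int N..int N}) (\<lambda>i. g (orbit_code S i))"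
    unfolding empirical_measure_def
    by (intro integral_distr measurable_uniform_count_measure_borel assms)
  then show ?thesis
    by (simp add: integral_uniform_count_measure window_avg_def nat_add_distrib)
qed

lemma tight_empirical_measure:
  assumes S: "S \<in> pm_seqs" shows "tight (empirical_measure S)"
  unfolding tight_def
proof (intro conjI allI impI real_distribution_empirical_measure)
  fix e :: real assume "0 < e"
  have "measure (empirical_measure S N) {-1<..1} = 1" for N
  proof -
    have "orbit_code S i \<in> {-1<..1}" for i
      using pm_encode_bounds[OF pm_seqs_translate[OF S, of i]] by (simp add: orbit_code_def)
    then have "orbit_code S -` {-1<..1} \<inter> {-int N..int N} = {-int N..int N}" by auto
    then show ?thesis
      unfolding empirical_measure_def
      by (subst measure_distr)
         (simp_all add: measurable_uniform_count_measure_borel space_uniform_count_measure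
           measure_uniform_count_measure)
  qed
  then show "\<exists>a b. a < b \<and> (\<forall>N. 1 - e < measure (empirical_measure S N) {a<..b})"
    using \<open>0 < e\<close> by (intro exI[of _ "-1"] exI[of _ 1]) auto
qed

lemma window_avg_convergent_subseq:
  fixes s :: "nat \<Rightarrow> nat"
  assumes S: "S \<in> pm_seqs" and s: "strict_mono s"
  obtains r \<nu> where "strict_mono r" "real_distribution \<nu>"
    "\<And>g B. (\<And>x. isCont g x) \<Longrightarrow> (\<And>x. \<bar>g x\<bar> \<le> B) \<Longrightarrow>
       (\<lambda>n. window_avg S g (s (r n))) \<longlonglongrightarrow> integral\<^sup>L \<nu> g"
proof -
  obtain r \<nu> where r: "strict_mono r" "real_distribution \<nu>"
    and weak: "weak_conv_m (empirical_measure S \<circ> s \<circ> r) \<nu>"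
    using tight_imp_convergent_subsubsequence[OF tight_empirical_measure[OF S] s] by blast
  have "(\<lambda>n. window_avg S g (s (r n))) \<longlonglongrightarrow> integral\<^sup>L \<nu> g"
    if g: "\<And>x. isCont g x" "\<And>x. \<bar>g x\<bar> \<le> B" for g B
  proof -
    have "g \<in> borel_measurable borel"
      using g by (intro borel_measurable_continuous_onI continuous_at_imp_continuous_on) auto
    moreover have "(\<lambda>n. integral\<^sup>L ((empirical_measure S \<circ> s \<circ> r) n) g) \<longlonglongrightarrow> integral\<^sup>L \<nu> g"
      by (rule weak_conv_imp_integral_bdd_continuous_conv[OF _ r(2) weak])
         (use real_distribution_empirical_measure g in auto)
    ultimately show ?thesis by (simp add: integral_empirical_measure)
  qed
  with r that show ?thesis by blast
qed

section \<open>Unique ergodicity and orbit averages\<close>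

lemma window_sum_shift_diff:
  fixes h :: "int \<Rightarrow> real"
  assumes "\<And>i. \<bar>h i\<bar> \<le> B"
  shows "\<bar>(\<Sum>i\<in>{-int N..int N}. h (i + 1)) - (\<Sum>i\<in>{-int N..int N}. h i)\<bar> \<le> 2 * B"
proof -
  have "(\<Sum>i\<in>{-int N..int N}. h (i + 1)) = sum h {-int N + 1..int N + 1}"
    by (subst sum.reindex[of "\<lambda>i. i + 1", unfolded comp_def, symmetric]) (auto simp: inj_on_def)
  also have "\<dots> = sum h {-int N..int N + 1} - h (-int N)"
  proof -
    have "{-int N..int N + 1} = insert (-int N) {-int N + 1..int N + 1}" by auto
    then show ?thesis by simp
  qed
  also have "sum h {-int N..int N + 1} = sum h {-int N..int N} + h (int N + 1)"
  proof -
    have "{-int N..int N + 1} = insert (int N + 1) {-int N..int N}" by auto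
    then show ?thesis by simp
  qed
  finally show ?thesis using assms[of "int N + 1"] assms[of "-int N"] by linarith
qed

lemma (in real_distribution) prob_closed_eq_1I:
  assumes G: "closed G" "G \<noteq> {}"
    and integral_one: "\<And>g :: real \<Rightarrow> real. (\<And>x. isCont g x) \<Longrightarrow> (\<And>x. \<bar>g x\<bar> \<le> 1) \<Longrightarrow>
      (\<And>x. x \<in> G \<Longrightarrow> g x = 1) \<Longrightarrow> integral\<^sup>L M g = 1"
  shows "prob G = 1"
proof -
  define g where "g k x = max 0 (1 - real (Suc k) * infdist x G)" for k x
  have cont: "isCont (g k) x" for k x
    unfolding g_def by (intro continuous_intros)
  have bound: "\<bar>g k x\<bar> \<le> 1" for k x
    unfolding g_def using infdist_nonneg[of x G] by auto
  have "(\<lambda>k. g k x) \<longlonglongrightarrow> indicator G x" for x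
  proof (cases "x \<in> G")
    case False
    then have pos: "0 < infdist x G"
      using in_closed_iff_infdist_zero[OF G] infdist_nonneg[of x G] by auto
    obtain K :: nat where K: "1 / infdist x G < K" using reals_Archimedean2 by blast
    have "g k x = 0" if "K \<le> k" for k
    proof -
      have "1 / infdist x G < Suc k" using K that by linarith
      then show ?thesis using pos by (simp add: g_def field_simps)
    qed
    then show ?thesis using False by (auto intro: tendsto_eventually eventually_sequentiallyI)
  qed (simp add: g_def)
  moreover have "borel_measurable M = borel_measurable borel"
    by (rule measurable_cong_sets) simp_all
  ultimately have "(\<lambda>k. integral\<^sup>L M (g k)) \<longlonglongrightarrow> integral\<^sup>L M (indicator G)"
    using cont bound G(1)
    by (intro integral_dominated_convergence[where w="\<lambda>_. 1"])
       (auto intro!: borel_measurable_continuous_onI continuous_at_imp_continuous_on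
         simp: borel_closed)
  moreover have "integral\<^sup>L M (g k) = 1" for k
    using cont bound by (intro integral_one) (auto simp: g_def)
  ultimately have "integral\<^sup>L M (indicator G :: real \<Rightarrow> real) = 1"
    by (simp add: LIMSEQ_const_iff)
  then show ?thesis by simp
qed

definition pm_indicator :: "real set \<Rightarrow> real \<Rightarrow> real" where
  "pm_indicator A v = (if 1 \<in> A then (1 + v) / 2 else 0) + (if -1 \<in> A then (1 - v) / 2 else 0)"

lemma continuous_on_pm_indicator: "continuous_on UNIV (pm_indicator A)"
  unfolding pm_indicator_def by (cases "1 \<in> A"; cases "-1 \<in> A") (auto intro!: continuous_intros)

lemma pm_indicator_bounds: "\<bar>v\<bar> \<le> 1 \<Longrightarrow> 0 \<le> pm_indicator A v \<and> pm_indicator A v \<le> 1"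
  unfolding pm_indicator_def by (cases "1 \<in> A"; cases "-1 \<in> A") (auto simp: abs_le_iff field_simps)

lemma pm_indicator_eq_indicator: "v \<in> {-1, 1} \<Longrightarrow> pm_indicator A v = indicator A v"
  unfolding pm_indicator_def by auto

definition cylinder_fun :: "int set \<Rightarrow> (int \<Rightarrow> real set) \<Rightarrow> int \<Rightarrow> real \<Rightarrow> real" where
  "cylinder_fun J A k r = (\<Prod>j\<in>J. pm_indicator (A j) (pm_coord (j + k) r))"

lemma isCont_cylinder_fun: "isCont (cylinder_fun J A k) r"
proof -
  have "continuous_on UNIV (cylinder_fun J A k)"
    unfolding cylinder_fun_def
    by (intro continuous_on_prod continuous_on_compose2[OF continuous_on_pm_indicator
          continuous_on_pm_coord]) auto
  then show ?thesis by (simp add: continuous_on_eq_continuous_at)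
qed

lemma abs_cylinder_fun_le: "\<bar>cylinder_fun J A k r\<bar> \<le> 1"
proof -
  have "0 \<le> cylinder_fun J A k r \<and> cylinder_fun J A k r \<le> 1"
    unfolding cylinder_fun_def using pm_indicator_bounds[OF abs_pm_coord_le]
    by (auto intro: prod_nonneg prod_le_1)
  then show ?thesis by simp
qed

lemma translate_in_seq_hull: "(\<lambda>j. S (j + i)) \<in> seq_hull S"
  unfolding seq_hull_def by (rule subsetD[OF closure_subset]) auto

lemma seq_hull_subset_pm_seqs: "S \<in> pm_seqs \<Longrightarrow> seq_hull S \<subseteq> pm_seqs"
  unfolding seq_hull_def
  by (intro closure_minimal closed_pm_seqs) (auto simp: pm_seqs_def)

lemma continuous_on_shift: "continuous_on UNIV shift"
  unfolding shift_def
  by (intro continuous_on_coordinatewise_then_product continuous_on_product_coordinates)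

lemma shift_measurable[measurable]: "shift \<in> borel_measurable borel"
  by (rule borel_measurable_continuous_onI[OF continuous_on_shift])

locale window_limit =
  fixes S :: "int \<Rightarrow> real" and \<nu> :: "real measure" and t :: "nat \<Rightarrow> nat"
  assumes S: "S \<in> pm_seqs"
    and real_distribution_nu: "real_distribution \<nu>"
    and strict_mono_t: "strict_mono t"
    and window_avg_tendsto: "\<And>g B. (\<And>x. isCont g x) \<Longrightarrow> (\<And>x. \<bar>g x\<bar> \<le> B) \<Longrightarrow>
      (\<lambda>n. window_avg S g (t n)) \<longlonglongrightarrow> integral\<^sup>L \<nu> g"
begin

sublocale nu: real_distribution \<nu> by (rule real_distribution_nu)

lemma measurable_nu_eq: "measurable \<nu> = measurable borel"
  by (intro ext measurable_cong_sets) simp_all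

lemma space_nu: "space \<nu> = UNIV"
  using sets_eq_imp_space_eq[OF nu.events_eq_borel] by simp

definition limit_support :: "real set" where
  "limit_support = pm_decode -` seq_hull S"

lemma closed_limit_support: "closed limit_support"
  unfolding limit_support_def seq_hull_def
  by (intro continuous_closed_vimage closed_closure)
     (use continuous_on_pm_decode continuous_on_eq_continuous_at in blast)

lemma orbit_code_in_limit_support: "orbit_code S i \<in> limit_support"
  unfolding limit_support_def by (simp add: pm_decode_orbit_code[OF S] translate_in_seq_hull)

lemma pm_coord_limit_support: "r \<in> limit_support \<Longrightarrow> pm_coord j r \<in> {-1, 1}"
  using seq_hull_subset_pm_seqs[OF S]
  unfolding limit_support_def pm_decode_def pm_seqs_def by auto

lemma prob_limit_support: "nu.prob limit_support = 1"
proof (rule nu.prob_closed_eq_1I[OF closed_limit_support])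
  show "limit_support \<noteq> {}" using orbit_code_in_limit_support by auto
  fix g :: "real \<Rightarrow> real"
  assume g: "\<And>x. isCont g x" "\<And>x. \<bar>g x\<bar> \<le> 1" "\<And>x. x \<in> limit_support \<Longrightarrow> g x = 1"
  have "window_avg S g N = 1" for N
    by (simp add: window_avg_def g(3)[OF orbit_code_in_limit_support] nat_add_distrib)
  with window_avg_tendsto[OF g(1,2)] show "integral\<^sup>L \<nu> g = 1"
    by (simp add: LIMSEQ_const_iff)
qed

lemma measure_cylinder:
  assumes J: "finite J" and A: "\<And>j. j \<in> J \<Longrightarrow> A j \<in> sets borel"
  shows "measure \<nu> {r. \<forall>j\<in>J. pm_coord (j + k) r \<in> A j} = integral\<^sup>L \<nu> (cylinder_fun J A k)"
proof -
  have "AE r in \<nu>. r \<in> limit_support"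
    using nu.AE_prob_1[OF prob_limit_support] .
  then have "AE r in \<nu>. indicator {r. \<forall>j\<in>J. pm_coord (j + k) r \<in> A j} r = cylinder_fun J A k r"
  proof eventually_elim
    fix r assume "r \<in> limit_support"
    then have "cylinder_fun J A k r = (\<Prod>j\<in>J. indicator (A j) (pm_coord (j + k) r))"
      unfolding cylinder_fun_def
      by (intro prod.cong refl pm_indicator_eq_indicator pm_coord_limit_support)
    also have "\<dots> = indicator {r. \<forall>j\<in>J. pm_coord (j + k) r \<in> A j} r"
      using J by (induction J rule: finite_induct) (auto simp: indicator_def)
    finally show "indicator {r. \<forall>j\<in>J. pm_coord (j + k) r \<in> A j} r = cylinder_fun J A k r" ..
  qed
  then have "integral\<^sup>L \<nu> (indicator {r. \<forall>j\<in>J. pm_coord (j + k) r \<in> A j})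
      = integral\<^sup>L \<nu> (cylinder_fun J A k)"
    using J A isCont_cylinder_fun
    by (intro integral_cong_AE)
       (auto simp: measurable_nu_eq intro!: borel_measurable_continuous_onI
         continuous_at_imp_continuous_on)
  then show ?thesis by simp
qed

lemma integral_eq_if_orbit_translate:
  fixes f g :: "real \<Rightarrow> real"
  assumes g: "\<And>x. isCont g x" "\<And>x. \<bar>g x\<bar> \<le> B"
    and f: "\<And>x. isCont f x" "\<And>x. \<bar>f x\<bar> \<le> B"
    and translate: "\<And>i. g (orbit_code S i) = f (orbit_code S (i + 1))"
  shows "integral\<^sup>L \<nu> g = integral\<^sup>L \<nu> f"
proof -
  have diff: "\<bar>window_avg S g N - window_avg S f N\<bar> \<le> 2 * B / (2 * real N + 1)" for N
  proof -
    have "window_avg S g N - window_avg S f N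
        = ((\<Sum>i\<in>{-int N..int N}. f (orbit_code S (i + 1))) - (\<Sum>i\<in>{-int N..int N}. f (orbit_code S i)))
          / (2 * real N + 1)"
      by (simp add: window_avg_def translate diff_divide_distrib)
    then show ?thesis
      using window_sum_shift_diff[of "\<lambda>i. f (orbit_code S i)" B N] f(2)
      by (simp add: abs_divide divide_right_mono)
  qed
  have "(\<lambda>N. 2 * B / (2 * real N + 1)) \<longlonglongrightarrow> 0" by real_asymp
  from LIMSEQ_subseq_LIMSEQ[OF this strict_mono_t]
  have "(\<lambda>n. window_avg S g (t n) - window_avg S f (t n)) \<longlonglongrightarrow> 0"
    by (rule Lim_null_comparison[rotated]) (use diff in \<open>simp add: o_def\<close>)
  moreover have "(\<lambda>n. window_avg S g (t n) - window_avg S f (t n)) \<longlonglongrightarrow>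
      integral\<^sup>L \<nu> g - integral\<^sup>L \<nu> f"
    by (intro tendsto_diff window_avg_tendsto[OF g] window_avg_tendsto[OF f])
  ultimately show ?thesis using LIMSEQ_unique by fastforce
qed

lemma integral_cylinder_fun_translate:
  "integral\<^sup>L \<nu> (cylinder_fun J A 1) = integral\<^sup>L \<nu> (cylinder_fun J A 0)"
  by (rule integral_eq_if_orbit_translate[OF isCont_cylinder_fun abs_cylinder_fun_le
        isCont_cylinder_fun abs_cylinder_fun_le])
     (simp add: cylinder_fun_def pm_coord_orbit_code[OF S] ac_simps)

definition limit_measure :: "(int \<Rightarrow> real) measure" where
  "limit_measure = distr \<nu> borel pm_decode"

lemma prob_space_limit_measure: "prob_space limit_measure"
  unfolding limit_measure_def by (rule nu.prob_space_distr) (simp add: measurable_nu_eq)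

lemma sets_limit_measure [simp]: "sets limit_measure = sets borel"
  by (simp add: limit_measure_def)

lemma space_limit_measure [simp]: "space limit_measure = UNIV"
  by (simp add: limit_measure_def)

lemma distr_shift_limit_measure: "distr limit_measure borel shift = limit_measure"
proof (rule measure_eqI_PiM_infinite[where I=UNIV and M="\<lambda>_. borel"])
  show "sets (distr limit_measure borel shift) = sets (Pi\<^sub>M UNIV (\<lambda>_::int. borel :: real measure))"
    "sets limit_measure = sets (Pi\<^sub>M UNIV (\<lambda>_::int. borel :: real measure))"
    by (simp_all add: sets_PiM_equal_borel)
  show "finite_measure (distr limit_measure borel shift)"
    by (intro prob_space.finite_measure prob_space.prob_space_distr prob_space_limit_measure)
       (simp add: measurable_cong_sets[OF sets_limit_measure refl])
  fix A :: "int \<Rightarrow> real set" and J :: "int set"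
  assume J: "finite J" "J \<subseteq> UNIV" and A: "\<And>i. i \<in> J \<Longrightarrow> A i \<in> sets borel"
  define C where "C = {x :: int \<Rightarrow> real. \<forall>j\<in>J. x j \<in> A j}"
  have emb: "prod_emb UNIV (\<lambda>_. borel) J (Pi\<^sub>E J A) = C"
    by (auto simp: prod_emb_def restrict_PiE_iff PiE_UNIV_domain C_def)
  have "prod_emb UNIV (\<lambda>_. borel) J (Pi\<^sub>E J A) \<in> sets (Pi\<^sub>M UNIV (\<lambda>_::int. borel :: real measure))"
    using J A by (intro sets_PiM_I) auto
  then have C_borel[measurable]: "C \<in> sets borel" unfolding emb sets_PiM_equal_borel .
  have cylinder: "emeasure limit_measure C' = integral\<^sup>L \<nu> (cylinder_fun J A k)"
    if "C' \<in> sets borel" "pm_decode -` C' = {r. \<forall>j\<in>J. pm_coord (j + k) r \<in> A j}" for C' k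
  proof -
    have "emeasure limit_measure C' = emeasure \<nu> {r. \<forall>j\<in>J. pm_coord (j + k) r \<in> A j}"
      unfolding limit_measure_def using that
      by (subst emeasure_distr) (simp_all add: measurable_nu_eq space_nu)
    then show ?thesis using measure_cylinder[OF J(1) A] by (simp add: nu.emeasure_eq_measure)
  qed
  have shift_C: "shift -` C \<in> sets borel"
    using measurable_sets_borel[OF shift_measurable C_borel] by simp
  have "emeasure (distr limit_measure borel shift) C = emeasure limit_measure (shift -` C)"
    by (subst emeasure_distr) (simp_all add: measurable_cong_sets[OF sets_limit_measure refl])
  also have "\<dots> = integral\<^sup>L \<nu> (cylinder_fun J A 1)"
    by (rule cylinder[OF shift_C]) (auto simp: pm_decode_def shift_def C_def)
  also have "\<dots> = integral\<^sup>L \<nu> (cylinder_fun J A 0)"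
    by (simp add: integral_cylinder_fun_translate)
  also have "\<dots> = emeasure limit_measure C"
    by (rule cylinder[OF C_borel, symmetric]) (auto simp: pm_decode_def C_def)
  finally show "emeasure (distr limit_measure borel shift) (prod_emb UNIV (\<lambda>_. borel) J (Pi\<^sub>E J A))
      = emeasure limit_measure (prod_emb UNIV (\<lambda>_. borel) J (Pi\<^sub>E J A))"
    unfolding emb .
qed

lemma shift_inv_prob_on_limit_measure: "shift_inv_prob_on (seq_hull S) limit_measure"
  unfolding shift_inv_prob_on_def
proof (intro conjI ballI prob_space_limit_measure sets_limit_measure)
  have "emeasure limit_measure (seq_hull S) = emeasure \<nu> limit_support"
    unfolding limit_measure_def limit_support_def
    by (subst emeasure_distr) (simp_all add: measurable_nu_eq space_nu borel_closed seq_hull_def)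
  then show "emeasure limit_measure (seq_hull S) = 1"
    using prob_limit_support by (simp add: nu.emeasure_eq_measure)
  fix A :: "(int \<Rightarrow> real) set" assume "A \<in> sets borel"
  then show "emeasure limit_measure (shift -` A) = emeasure limit_measure A"
    by (subst (2) distr_shift_limit_measure[symmetric], subst emeasure_distr)
       (simp_all add: measurable_cong_sets[OF sets_limit_measure refl])
qed

end

lemma LIMSEQ_if_subseq_subseq:
  fixes X :: "nat \<Rightarrow> 'a :: metric_space"
  assumes "\<And>s :: nat \<Rightarrow> nat. strict_mono s \<Longrightarrow> \<exists>r :: nat \<Rightarrow> nat. strict_mono r \<and> (\<lambda>n. X (s (r n))) \<longlonglongrightarrow> L"
  shows "X \<longlonglongrightarrow> L"
proof (rule ccontr)
  assume "\<not> X \<longlonglongrightarrow> L"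
  then obtain e where "e > 0" and "infinite {n. \<not> dist (X n) L < e}"
    by (auto simp: tendsto_iff not_eventually INFM_iff_infinite cofinite_eq_sequentially[symmetric])
  then obtain s :: "nat \<Rightarrow> nat" where s: "\<And>n. \<not> dist (X (s n)) L < e" and "strict_mono s"
    using enumerate_in_set enumerate_mono by (fastforce simp: strict_mono_def)
  obtain r where "(\<lambda>n. X (s (r n))) \<longlonglongrightarrow> L" using assms[OF \<open>strict_mono s\<close>] by blast
  then show False using s \<open>e > 0\<close> by (auto dest: tendstoD)
qed

theorem uniquely_ergodic_orbit_avg_convergent:
  fixes f :: "(int \<Rightarrow> real) \<Rightarrow> real"
  assumes S: "S \<in> pm_seqs" and ue: "uniquely_ergodic_hull S"
    and f: "continuous_on UNIV f" and f_bound: "\<And>x. (\<And>i. \<bar>x i\<bar> \<le> 1) \<Longrightarrow> \<bar>f x\<bar> \<le> B"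
  shows "convergent (\<lambda>N. (\<Sum>i\<in>{-int N..int N}. f (\<lambda>j. S (j + i))) / (2 * real N + 1))"
proof -
  obtain \<mu> where \<mu>: "\<And>\<mu>'. shift_inv_prob_on (seq_hull S) \<mu>' \<Longrightarrow> \<mu>' = \<mu>"
    using ue unfolding uniquely_ergodic_hull_def by blast
  have f_measurable: "f \<in> borel_measurable borel"
    using f by (rule borel_measurable_continuous_onI)
  have "continuous_on UNIV (\<lambda>r. f (pm_decode r))"
    using continuous_on_compose2[OF f continuous_on_pm_decode] by simp
  then have cont: "isCont (\<lambda>r. f (pm_decode r)) x" for x
    by (simp add: continuous_on_eq_continuous_at)
  have bound: "\<bar>f (pm_decode x)\<bar> \<le> B" for x
    using f_bound abs_pm_coord_le by (simp add: pm_decode_def)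
  have "window_avg S (\<lambda>r. f (pm_decode r)) \<longlonglongrightarrow> integral\<^sup>L \<mu> f"
  proof (rule LIMSEQ_if_subseq_subseq)
    fix s :: "nat \<Rightarrow> nat" assume "strict_mono s"
    then obtain r \<nu> where r: "strict_mono r" "real_distribution \<nu>"
      and lim: "\<And>g B. (\<And>x. isCont g x) \<Longrightarrow> (\<And>x. \<bar>g x\<bar> \<le> B) \<Longrightarrow>
        (\<lambda>n. window_avg S g (s (r n))) \<longlonglongrightarrow> integral\<^sup>L \<nu> g"
      using window_avg_convergent_subseq[OF S] by metis
    interpret window_limit S \<nu> "s \<circ> r"
    proof (intro window_limit.intro S r(2) strict_mono_o[OF \<open>strict_mono s\<close> r(1)])
      fix g :: "real \<Rightarrow> real" and B :: real
      assume "\<And>x. isCont g x" "\<And>x. \<bar>g x\<bar> \<le> B"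
      from lim[OF this] show "(\<lambda>n. window_avg S g ((s \<circ> r) n)) \<longlonglongrightarrow> integral\<^sup>L \<nu> g"
        by simp
    qed
    have "integral\<^sup>L \<mu> f = integral\<^sup>L limit_measure f"
      using \<mu>[OF shift_inv_prob_on_limit_measure] by simp
    also have "\<dots> = integral\<^sup>L \<nu> (\<lambda>r. f (pm_decode r))"
      unfolding limit_measure_def by (simp add: integral_distr measurable_nu_eq f_measurable)
    finally show "\<exists>r. strict_mono r \<and>
        (\<lambda>n. window_avg S (\<lambda>r. f (pm_decode r)) (s (r n))) \<longlonglongrightarrow> integral\<^sup>L \<mu> f"
      using lim[OF cont bound] r(1) by auto
  qed
  moreover have "window_avg S (\<lambda>r. f (pm_decode r))
      = (\<lambda>N. (\<Sum>i\<in>{-int N..int N}. f (\<lambda>j. S (j + i))) / (2 * real N + 1))"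
    by (simp add: fun_eq_iff window_avg_def pm_decode_orbit_code[OF S])
  ultimately show ?thesis unfolding convergent_def by auto
qed

corollary uniquely_ergodic_autocorr_avg_convergent:
  assumes S: "S \<in> pm_seqs" and ue: "uniquely_ergodic_hull S"
  shows "convergent (autocorr_avg S m)"
proof -
  have "continuous_on UNIV (\<lambda>x :: int \<Rightarrow> real. x 0 * x (-m))"
    by (intro continuous_intros continuous_on_product_coordinates)
  moreover have "\<bar>x 0 * x (-m)\<bar> \<le> 1" if "\<And>i. \<bar>x i\<bar> \<le> 1" for x :: "int \<Rightarrow> real"
    using that[of 0] that[of "-m"] by (simp add: abs_mult mult_le_one)
  ultimately have "convergent (\<lambda>N. (\<Sum>i\<in>{-int N..int N}. S (0 + i) * S (-m + i)) / (2 * real N + 1))"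
    by (rule uniquely_ergodic_orbit_avg_convergent[OF S ue])
  moreover have "autocorr_avg S m
      = (\<lambda>N. (\<Sum>i\<in>{-int N..int N}. S (0 + i) * S (-m + i)) / (2 * real N + 1))"
    by (simp add: fun_eq_iff autocorr_avg_def)
  ultimately show ?thesis by simp
qed

section \<open>A strong law for weakly correlated bounded variables\<close>

lemma filterlim_floor_sqrt_at_top: "filterlim floor_sqrt at_top at_top"
  unfolding filterlim_at_top eventually_at_top_linorder by (metis le_floor_sqrtI)

lemma tendsto_zero_if_tendsto_zero_along_squares:
  fixes a :: "nat \<Rightarrow> real"
  assumes increments: "\<And>K N. K \<le> N \<Longrightarrow> \<bar>a N - a K\<bar> \<le> C * real (N - K)"
    and squares: "(\<lambda>k. a (k^2) / (2 * real (k^2) + 1)) \<longlonglongrightarrow> 0"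
  shows "(\<lambda>N. a N / (2 * real N + 1)) \<longlonglongrightarrow> 0"
proof -
  have "0 \<le> C" using increments[of 0 1] by simp
  define b where "b = (\<lambda>k. (\<bar>a (k^2)\<bar> + 2 * C * real k) / (2 * real (k^2) + 1))"
  have "(\<lambda>k. real k / (2 * real (k^2) + 1)) \<longlonglongrightarrow> 0" by real_asymp
  from tendsto_add_zero[OF tendsto_rabs_zero[OF squares] tendsto_mult_right_zero[OF this, of "2 * C"]]
  have "b \<longlonglongrightarrow> 0" by (simp add: b_def abs_divide add_divide_distrib)
  then have "(\<lambda>N. b (floor_sqrt N)) \<longlonglongrightarrow> 0"
    using filterlim_floor_sqrt_at_top by (rule filterlim_compose)
  then show ?thesis
  proof (rule Lim_null_comparison[rotated], intro always_eventually allI)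
    fix N
    define k where "k = floor_sqrt N"
    have k2: "k^2 \<le> N" unfolding k_def by simp
    have "N < k^2 + 2 * k + 1"
      using Suc_floor_sqrt_power2_gt[of N] unfolding k_def by (simp add: power2_eq_square)
    then have "C * real (N - k^2) \<le> C * (2 * real k)"
      using \<open>0 \<le> C\<close> by (intro mult_left_mono) auto
    then have "\<bar>a N\<bar> \<le> \<bar>a (k^2)\<bar> + 2 * C * real k"
      using increments[OF k2] by linarith
    then have "\<bar>a N\<bar> / (2 * real N + 1) \<le> (\<bar>a (k^2)\<bar> + 2 * C * real k) / (2 * real N + 1)"
      by (intro divide_right_mono) auto
    also have "\<dots> \<le> b k"
      unfolding b_def using k2 \<open>0 \<le> C\<close>
      by (intro divide_left_mono) (auto simp flip: of_nat_power)
    finally show "norm (a N / (2 * real N + 1)) \<le> b (floor_sqrt N)"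
      by (simp add: k_def abs_divide)
  qed
qed

context prob_space
begin

lemma AE_tendsto_zero_if_summable_second_moments:
  fixes X :: "nat \<Rightarrow> 'a \<Rightarrow> real"
  assumes [measurable]: "\<And>k. X k \<in> borel_measurable M"
    and integrable: "\<And>k. integrable M (\<lambda>\<omega>. (X k \<omega>)^2)"
    and summable: "summable (\<lambda>k. expectation (\<lambda>\<omega>. (X k \<omega>)^2))"
  shows "AE \<omega> in M. (\<lambda>k. X k \<omega>) \<longlonglongrightarrow> 0"
proof -
  have small: "AE \<omega> in M. eventually (\<lambda>k. \<bar>X k \<omega>\<bar> < e) sequentially" if "0 < e" for e
  proof -
    define B where "B k = {\<omega> \<in> space M. e^2 \<le> (X k \<omega>)^2}" for k
    have [measurable]: "B k \<in> sets M" for k unfolding B_def by measurable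
    have "prob (B k) \<le> expectation (\<lambda>\<omega>. (X k \<omega>)^2) / e^2" for k
      unfolding B_def using that
      by (intro integral_Markov_inequality_measure[OF integrable, where A="space M"]) auto
    then have "summable (\<lambda>k. prob (B k))"
      by (intro summable_comparison_test'[OF summable_divide[OF summable]]) auto
    then have "AE \<omega> in M. eventually (\<lambda>k. \<omega> \<in> space M - B k) sequentially"
      by (intro borel_cantelli_AE1) (simp_all add: emeasure_eq_measure)
    then show ?thesis
    proof eventually_elim
      case (elim \<omega>)
      then show ?case
        by eventually_elim (use that abs_le_square_iff[of e] in \<open>auto simp: B_def not_le[symmetric]\<close>)
    qed
  qed
  have "AE \<omega> in M. \<forall>j::nat. eventually (\<lambda>k. \<bar>X k \<omega>\<bar> < inverse (Suc j)) sequentially"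
    unfolding AE_all_countable by (intro allI small) simp
  then show ?thesis
  proof eventually_elim
    case (elim \<omega>)
    show ?case
    proof (rule tendstoI)
      fix e :: real assume "0 < e"
      then obtain j :: nat where j: "inverse (Suc j) < e" using reals_Archimedean by blast
      from elim have "eventually (\<lambda>k. \<bar>X k \<omega>\<bar> < inverse (Suc j)) sequentially" by blast
      then show "eventually (\<lambda>k. dist (X k \<omega>) 0 < e) sequentially"
        by eventually_elim (use j in simp)
    qed
  qed
qed

lemma expectation_sum_square_le:
  fixes W :: "int \<Rightarrow> 'a \<Rightarrow> real"
  assumes I: "finite I"
    and [measurable]: "\<And>i. W i \<in> borel_measurable M"
    and bound: "\<And>i \<omega>. \<omega> \<in> space M \<Longrightarrow> \<bar>W i \<omega>\<bar> \<le> C"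
    and uncorrelated: "\<And>i j. j \<notin> {i, i + m, i - m} \<Longrightarrow> expectation (\<lambda>\<omega>. W i \<omega> * W j \<omega>) = 0"
  shows "integrable M (\<lambda>\<omega>. (\<Sum>i\<in>I. W i \<omega>)^2)"
    and "expectation (\<lambda>\<omega>. (\<Sum>i\<in>I. W i \<omega>)^2) \<le> 3 * C^2 * card I"
proof -
  have product_bound: "\<bar>W i \<omega> * W j \<omega>\<bar> \<le> C^2" if "\<omega> \<in> space M" for i j \<omega>
    using bound[OF that, of i] bound[OF that, of j]
    by (simp add: abs_mult power2_eq_square mult_mono')
  have integrable_product: "integrable M (\<lambda>\<omega>. W i \<omega> * W j \<omega>)" for i j
    using product_bound by (intro integrable_const_bound[where B="C^2"]) auto
  have square: "(\<Sum>i\<in>I. W i \<omega>)^2 = (\<Sum>i\<in>I. \<Sum>j\<in>I. W i \<omega> * W j \<omega>)" for \<omega>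
    by (simp add: power2_eq_square sum_product)
  show "integrable M (\<lambda>\<omega>. (\<Sum>i\<in>I. W i \<omega>)^2)"
    unfolding square by (simp add: integrable_sum integrable_product)
  have row_bound: "(\<Sum>j\<in>I. expectation (\<lambda>\<omega>. W i \<omega> * W j \<omega>)) \<le> 3 * C^2" for i
  proof -
    define K where "K = I \<inter> {i, i + m, i - m}"
    have "(\<Sum>j\<in>I. expectation (\<lambda>\<omega>. W i \<omega> * W j \<omega>)) = (\<Sum>j\<in>K. expectation (\<lambda>\<omega>. W i \<omega> * W j \<omega>))"
      unfolding K_def using I uncorrelated by (intro sum.mono_neutral_right) auto
    also have "\<dots> \<le> real (card K) * C^2"
    proof (rule sum_bounded_above)
      fix j
      have "expectation (\<lambda>\<omega>. W i \<omega> * W j \<omega>) \<le> expectation (\<lambda>_. C^2)"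
        using product_bound by (intro integral_mono[OF integrable_product]) (auto simp: abs_le_iff)
      then show "expectation (\<lambda>\<omega>. W i \<omega> * W j \<omega>) \<le> C^2" by (simp add: prob_space)
    qed
    also have "\<dots> \<le> 3 * C^2"
    proof -
      have "card K \<le> card {i, i + m, i - m}" unfolding K_def by (intro card_mono) auto
      also have "\<dots> \<le> 3" by (simp add: card_insert_if)
      finally show ?thesis by (intro mult_right_mono) auto
    qed
    finally show ?thesis .
  qed
  have "expectation (\<lambda>\<omega>. (\<Sum>i\<in>I. W i \<omega>)^2) = (\<Sum>i\<in>I. \<Sum>j\<in>I. expectation (\<lambda>\<omega>. W i \<omega> * W j \<omega>))"
    unfolding square using integrable_product
    by (simp add: Bochner_Integration.integral_sum integrable_sum)
  also have "\<dots> \<le> (\<Sum>i\<in>I. 3 * C^2)" by (intro sum_mono row_bound)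
  finally show "expectation (\<lambda>\<omega>. (\<Sum>i\<in>I. W i \<omega>)^2) \<le> 3 * C^2 * card I" by (simp add: mult.commute)
qed

lemma AE_window_avg_tendsto_zero:
  fixes W :: "int \<Rightarrow> 'a \<Rightarrow> real"
  assumes [measurable]: "\<And>i. W i \<in> borel_measurable M"
    and bound: "\<And>i \<omega>. \<omega> \<in> space M \<Longrightarrow> \<bar>W i \<omega>\<bar> \<le> C"
    and uncorrelated: "\<And>i j. j \<notin> {i, i + m, i - m} \<Longrightarrow> expectation (\<lambda>\<omega>. W i \<omega> * W j \<omega>) = 0"
  shows "AE \<omega> in M. (\<lambda>N. (\<Sum>i\<in>{-int N..int N}. W i \<omega>) / (2 * real N + 1)) \<longlonglongrightarrow> 0"
proof -
  define A where "A N \<omega> = (\<Sum>i\<in>{-int N..int N}. W i \<omega>)" for N \<omega>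
  have moments: "integrable M (\<lambda>\<omega>. (A N \<omega>)^2)"
    "expectation (\<lambda>\<omega>. (A N \<omega>)^2) \<le> 3 * C^2 * (2 * real N + 1)" for N
    using expectation_sum_square_le[OF _ assms, where I="{-int N..int N}"]
    by (simp_all add: A_def)
  define X where "X k \<omega> = A (k^2) \<omega> / (2 * real (k^2) + 1)" for k \<omega>
  have X_measurable: "X k \<in> borel_measurable M" for k unfolding X_def A_def by measurable
  have X_integrable: "integrable M (\<lambda>\<omega>. (X k \<omega>)^2)" for k
    using moments(1) by (simp add: X_def power_divide)
  have X_moment: "expectation (\<lambda>\<omega>. (X k \<omega>)^2) \<le> 3 * C^2 / (2 * real (k^2) + 1)" for k
  proof -
    define d where "d = 2 * real (k^2) + 1"
    have "d > 0" unfolding d_def by (simp add: add_nonneg_pos)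
    have "expectation (\<lambda>\<omega>. (X k \<omega>)^2) = expectation (\<lambda>\<omega>. (A (k^2) \<omega>)^2) / d^2"
      by (simp add: X_def d_def power_divide)
    also have "\<dots> \<le> 3 * C^2 * d / d^2"
      using moments(2)[of "k^2"] by (intro divide_right_mono) (simp_all add: d_def)
    also have "\<dots> = 3 * C^2 / d" using \<open>d > 0\<close> by (simp add: power2_eq_square)
    finally show ?thesis unfolding d_def .
  qed
  have "summable (\<lambda>k. expectation (\<lambda>\<omega>. (X k \<omega>)^2))"
  proof (rule summable_comparison_test')
    show "summable (\<lambda>k. 3 * C^2 * inverse (real k ^ 2))"
      by (intro summable_mult inverse_power_summable) auto
    fix k :: nat assume "1 \<le> k"
    have "3 * C^2 / (2 * real (k^2) + 1) \<le> 3 * C^2 / real (k^2)"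
      using \<open>1 \<le> k\<close> by (intro divide_left_mono) (auto intro!: mult_pos_pos add_nonneg_pos)
    then show "norm (expectation (\<lambda>\<omega>. (X k \<omega>)^2)) \<le> 3 * C^2 * inverse (real k ^ 2)"
      using X_moment[of k] by (simp add: divide_inverse)
  qed
  from AE_tendsto_zero_if_summable_second_moments[OF X_measurable X_integrable this] AE_space
  show ?thesis
  proof eventually_elim
    case (elim \<omega>)
    have "\<bar>A N \<omega> - A K \<omega>\<bar> \<le> 2 * C * real (N - K)" if "K \<le> N" for K N
    proof -
      have subset: "{-int K..int K} \<subseteq> {-int N..int N}" using that by auto
      then have "\<bar>A N \<omega> - A K \<omega>\<bar> = \<bar>\<Sum>i\<in>{-int N..int N} - {-int K..int K}. W i \<omega>\<bar>"
        by (simp add: A_def sum_diff)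
      also have "\<dots> \<le> real (card ({-int N..int N} - {-int K..int K})) * C"
        using bound[OF elim(2)] by (intro order.trans[OF sum_abs sum_bounded_above])
      also have "card ({-int N..int N} - {-int K..int K}) = 2 * (N - K)"
        using subset that by (simp add: card_Diff_subset)
      finally show ?thesis using that by (simp add: of_nat_diff algebra_simps)
    qed
    from tendsto_zero_if_tendsto_zero_along_squares[OF this] elim(1)
    show ?case by (simp add: A_def X_def)
  qed
qed

end

section \<open>Bernoullisation\<close>

lemma autocorr_avg_zero_pm:
  assumes "\<And>i. w i \<in> {-1, 1}" shows "autocorr_avg w 0 N = 1"
proof -
  have "w i * w i = 1" for i using assms[of i] by auto
  then show ?thesis by (simp add: autocorr_avg_def nat_add_distrib)
qed

locale pm_bernoulli_family = prob_space +
  fixes Y :: "int \<Rightarrow> 'a \<Rightarrow> real" and p :: real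
  assumes measurable_Y [measurable]: "\<And>i. Y i \<in> borel_measurable M"
    and indep_Y: "indep_vars (\<lambda>_. borel) Y UNIV"
    and Y_pm: "\<And>i \<omega>. \<omega> \<in> space M \<Longrightarrow> Y i \<omega> \<in> {-1, 1}"
    and prob_Y_eq_1: "\<And>i. prob {\<omega> \<in> space M. Y i \<omega> = 1} = p"
begin

lemma expectation_Y: "expectation (Y i) = 2 * p - 1"
proof -
  define B where "B = {\<omega> \<in> space M. Y i \<omega> = 1}"
  have [measurable]: "B \<in> sets M" unfolding B_def by measurable
  have "Y i \<omega> = 2 * indicator B \<omega> - 1" if "\<omega> \<in> space M" for \<omega>
    using Y_pm[OF that, of i] that unfolding B_def by auto
  then have "expectation (Y i) = expectation (\<lambda>\<omega>. 2 * indicator B \<omega> - 1)"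
    by (intro Bochner_Integration.integral_cong) auto
  also have "\<dots> = 2 * prob B - 1"
    by (subst Bochner_Integration.integral_diff) (auto simp: prob_space emeasure_eq_measure)
  finally show ?thesis unfolding B_def prob_Y_eq_1 .
qed

lemma integrable_Y: "integrable M (Y i)"
proof -
  have "\<bar>Y i \<omega>\<bar> \<le> 1" if "\<omega> \<in> space M" for \<omega> using Y_pm[OF that, of i] by auto
  then show ?thesis by (intro integrable_const_bound[where B=1]) (auto intro!: AE_I2)
qed

lemma
  assumes "finite J"
  shows integrable_prod_Y: "integrable M (\<lambda>\<omega>. \<Prod>i\<in>J. Y i \<omega>)"
    and expectation_prod_Y: "expectation (\<lambda>\<omega>. \<Prod>i\<in>J. Y i \<omega>) = (2 * p - 1) ^ card J"
proof -
  have indep: "indep_vars (\<lambda>_. borel) Y J" by (rule indep_vars_subset[OF indep_Y]) auto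
  show "integrable M (\<lambda>\<omega>. \<Prod>i\<in>J. Y i \<omega>)"
    by (rule indep_vars_integrable[OF assms indep integrable_Y])
  show "expectation (\<lambda>\<omega>. \<Prod>i\<in>J. Y i \<omega>) = (2 * p - 1) ^ card J"
    by (simp add: indep_vars_lebesgue_integral[OF assms indep integrable_Y] expectation_Y)
qed

lemma autocorr_avg_zero_lag:
  assumes S: "S \<in> pm_seqs" and "\<omega> \<in> space M"
  shows "autocorr_avg (\<lambda>i. S i * Y i \<omega>) 0 = (\<lambda>_. 1)"
proof (intro ext autocorr_avg_zero_pm)
  fix i
  have "S i = -1 \<or> S i = 1" "Y i \<omega> = -1 \<or> Y i \<omega> = 1"
    using S Y_pm[OF \<open>\<omega> \<in> space M\<close>] unfolding pm_seqs_def by auto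
  then show "S i * Y i \<omega> \<in> {-1, 1}" by auto
qed

lemma AE_autocorr_avg_tendsto:
  assumes S: "S \<in> pm_seqs" and S_lim: "autocorr_avg S m \<longlonglongrightarrow> L" and "m \<noteq> 0"
  shows "AE \<omega> in M. autocorr_avg (\<lambda>i. S i * Y i \<omega>) m \<longlonglongrightarrow> (2 * p - 1)^2 * L"
proof -
  define c where "c = (2 * p - 1)^2"
  define W where "W i \<omega> = S i * S (i - m) * (Y i \<omega> * Y (i - m) \<omega> - c)" for i \<omega>
  define P where "P J \<omega> = (\<Prod>k\<in>J. Y k \<omega>)" for J \<omega>
  have uncorrelated: "expectation (\<lambda>\<omega>. W i \<omega> * W j \<omega>) = 0" if "j \<notin> {i, i + m, i - m}" for i j
  proof -
    define K where "K = S i * S (i - m) * (S j * S (j - m))"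
    have "W i \<omega> * W j \<omega> = K * (P {i, i - m, j, j - m} \<omega> - c * P {i, i - m} \<omega> - c * P {j, j - m} \<omega> + c^2)"
      for \<omega>
      using that \<open>m \<noteq> 0\<close> unfolding W_def K_def P_def by (simp add: algebra_simps power2_eq_square)
    moreover have "integrable M (P J)" "expectation (P J) = (2 * p - 1) ^ card J" if "finite J" for J
      unfolding P_def using that by (simp_all add: integrable_prod_Y expectation_prod_Y)
    ultimately have "expectation (\<lambda>\<omega>. W i \<omega> * W j \<omega>)
        = K * ((2 * p - 1) ^ 4 - c * (2 * p - 1)^2 - c * (2 * p - 1)^2 + c^2)"
      using that \<open>m \<noteq> 0\<close> by (simp add: prob_space card_insert_if power2_eq_square power4_eq_xxxx)
    also have "\<dots> = 0" by (simp add: c_def power2_eq_square power4_eq_xxxx)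
    finally show ?thesis .
  qed
  have bound: "\<bar>W i \<omega>\<bar> \<le> 1 + c" if "\<omega> \<in> space M" for i \<omega>
  proof -
    have "S k = -1 \<or> S k = 1" "Y k \<omega> = -1 \<or> Y k \<omega> = 1" for k
      using S Y_pm[OF that] unfolding pm_seqs_def by auto
    then have "\<bar>S k\<bar> = 1" "\<bar>Y k \<omega>\<bar> = 1" for k by (metis abs_1 abs_minus_cancel)+
    then have "\<bar>W i \<omega>\<bar> = \<bar>Y i \<omega> * Y (i - m) \<omega> - c\<bar>" "\<bar>Y i \<omega> * Y (i - m) \<omega>\<bar> = 1"
      unfolding W_def by (simp_all add: abs_mult)
    moreover have "0 \<le> c" unfolding c_def by simp
    ultimately show ?thesis by linarith
  qed
  have "AE \<omega> in M. (\<lambda>N. (\<Sum>i\<in>{-int N..int N}. W i \<omega>) / (2 * real N + 1)) \<longlonglongrightarrow> 0"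
    by (rule AE_window_avg_tendsto_zero[OF _ bound uncorrelated]) (simp_all add: W_def)
  then show ?thesis
  proof eventually_elim
    case (elim \<omega>)
    have "autocorr_avg (\<lambda>i. S i * Y i \<omega>) m
        = (\<lambda>N. c * autocorr_avg S m N + (\<Sum>i\<in>{-int N..int N}. W i \<omega>) / (2 * real N + 1))"
    proof
      fix N
      have "(\<Sum>i\<in>{-int N..int N}. S i * Y i \<omega> * (S (i - m) * Y (i - m) \<omega>))
          = c * (\<Sum>i\<in>{-int N..int N}. S i * S (i - m)) + (\<Sum>i\<in>{-int N..int N}. W i \<omega>)"
        unfolding W_def sum_distrib_left sum.distrib[symmetric] by (rule sum.cong) (simp_all add: algebra_simps)
      then show "autocorr_avg (\<lambda>i. S i * Y i \<omega>) m N
          = c * autocorr_avg S m N + (\<Sum>i\<in>{-int N..int N}. W i \<omega>) / (2 * real N + 1)"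
        unfolding autocorr_avg_def divide_inverse by (simp add: algebra_simps)
    qed
    moreover have "(\<lambda>N. c * autocorr_avg S m N + (\<Sum>i\<in>{-int N..int N}. W i \<omega>) / (2 * real N + 1))
        \<longlonglongrightarrow> c * L + 0"
      by (intro tendsto_add tendsto_mult_left S_lim elim)
    ultimately show ?case unfolding c_def by simp
  qed
qed

end

theorem mainTheorem1:
  fixes S :: "int \<Rightarrow> real" and p :: real
    and M :: "'a measure" and Y :: "int \<Rightarrow> 'a \<Rightarrow> real"
  assumes S_pm: "\<forall>i. S i \<in> {-1, 1}"
    and ue: "uniquely_ergodic_hull S"
    and p: "0 \<le> p" "p \<le> 1"
    and M: "prob_space M"
    and Y_rv: "\<forall>i. Y i \<in> borel_measurable M"
    and Y_indep: "prob_space.indep_vars M (\<lambda>_. borel) Y UNIV"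
    and Y_pm: "\<forall>i. \<forall>\<omega>\<in>space M. Y i \<omega> \<in> {-1, 1}"
    and Y_p: "\<forall>i. measure M {\<omega> \<in> space M. Y i \<omega> = 1} = p"
  shows "AE \<omega> in M. \<forall>m. convergent (autocorr_avg (\<lambda>i. S i * Y i \<omega>) m) \<and>
           eta (\<lambda>i. S i * Y i \<omega>) m = (if m = 0 then 1 else (2 * p - 1)^2 * eta S m)"
proof -
  interpret pm_bernoulli_family M Y p
    using Y_rv Y_indep Y_pm Y_p by (intro pm_bernoulli_family.intro M pm_bernoulli_family_axioms.intro) auto
  have S: "S \<in> pm_seqs" using S_pm by (simp add: pm_seqs_def)
  have "AE \<omega> in M. convergent (autocorr_avg (\<lambda>i. S i * Y i \<omega>) m) \<and>
      eta (\<lambda>i. S i * Y i \<omega>) m = (if m = 0 then 1 else (2 * p - 1)^2 * eta S m)" for m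
  proof (cases "m = 0")
    case True
    with autocorr_avg_zero_lag[OF S] show ?thesis
      by (intro AE_I2) (simp add: eta_def convergent_const)
  next
    case False
    have "autocorr_avg S m \<longlonglongrightarrow> eta S m"
      using uniquely_ergodic_autocorr_avg_convergent[OF S ue]
      by (simp add: eta_def convergent_LIMSEQ_iff)
    from AE_autocorr_avg_tendsto[OF S this False]
    show ?thesis by eventually_elim (auto simp: False eta_def convergent_def limI)
  qed
  then show ?thesis by (simp add: AE_all_countable)
qed

end
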